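(* Let $A$ be a finite alphabet, $X\subseteq A^{\mathbb{Z}}$ a subshift, $F\colon X\to X$ a cellular automaton on $X$, $\mu$ a $\sigma$-ergodic Borel probability measure on $X$ which is equicontinuous for $(X,F)$, and $B$ a blocking word for $(X,F)$ with $\mu([B]_0)>0$. Fix $k\ge 0$ and a word $u\in A^{2k+1}$. Then the sequence $$W_m(u)=\frac{1}{p(k,m)}\sum_{i=0}^{p(k,m)-1}\mu\Big(R(k,m)\cap F^{-(i+p'(k,m))}([u]_{-k})\Big),\qquad m\in\mathbb{N},$$ is non-decreasing in $m$.
   Context: $A^{\mathbb{Z}}$ has the product topology with metric $d(x,y)=2^{-i}$, $i=\min\{|j|:x_j\ne y_j\}$, and shift $\sigma((x_i)_i)=(x_{i+1})_i$. A subshift is a closed $\sigma$-invariant subset of $A^{\mathbb{Z}}$; a cellular automaton on $X$ is a continuous $F\colon X\to X$ commuting with $\sigma$, with a radius $r$ and local map $f$ such that $F(x)_i=f(x_{i-r},\dots,x_{i+r})$. For $x$ and $p\le q$, $x(p,q)=x_p\cdots x_q$; for a word $u$ and $t\in\mathbb{Z}$, $[u]_t=\{x\in X: x_{t+j-1}=u_j,\ 1\le j\le|u|\}$. A word $B\in A^{2k_0+1}$ is a blocking word for $(X,F)$ if there exist $i$ with $2i+1\ge r$ and words $v_n$ of length $2i+1$ such that every $x\in X$ with $x(-k_0,k_0)=B$ satisfies $F^n(x)(-i,i)=v_n$ for all $n\ge 1$. Equicontinuity point: for all $\varepsilon>0$ there is $\eta>0$ with $d(x,y)\le\eta\Rightarrow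 d(F^ix,F^iy)\le\varepsilon$ for all $i>0$; $\mu$ is equicontinuous for $(X,F)$ if equicontinuity points have $\mu$-measure 1. $R(k,m)$ is the set of points of $X$ having an occurrence of $B$ between coordinates $-m-k$ and $-k$ and another between coordinates $k$ and $m+k$. For $x\in R(k,m)$, $(F^n(x)(-k,k))_{n\ge0}$ depends only on $x(-m-k,m+k)$ and is ultimately periodic with period $p(x,k,m)$ and preperiod $p'(x,k,m)$; $p(k,m)$ is the least common multiple of the $p(x,k,m)$ and $p'(k,m)$ the maximum of the $p'(x,k,m)$ over $x\in R(k,m)$. *)

theory Defs
  imports "HOL-Probability.Probability"
begin

type_synonym 'a config = "int \<Rightarrow> 'a"

definition shift :: "'a config \<Rightarrow> 'a config" where
  "shift x = (\<lambda>i. x (i + 1))"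

definition cdist :: "'a config \<Rightarrow> 'a config \<Rightarrow> real" where
  "cdist x y = (if x = y then 0
     else (1/2) ^ (LEAST n::nat. \<exists>j::int. nat \<bar>j\<bar> = n \<and> x j \<noteq> y j))"

definition window :: "'a config \<Rightarrow> int \<Rightarrow> int \<Rightarrow> 'a list" where
  "window x p q = map x [p..q]"

definition cyl :: "'a config set \<Rightarrow> 'a list \<Rightarrow> int \<Rightarrow> 'a config set" where
  "cyl X u t = {x \<in> X. \<forall>j\<in>{1..length u}. x (t + int j - 1) = u ! (j - 1)}"

text \<open>Closedness in the product topology, i.e. metric closedness for cdist.\<close>
definition closed_conf :: "'a config set \<Rightarrow> bool" where
  "closed_conf X \<longleftrightarrow> (\<forall>x. (\<forall>e>0. \<exists>y\<in>X. cdist x y < e) \<longrightarrow> x \<in> X)"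

definition subshift :: "'a config set \<Rightarrow> bool" where
  "subshift X \<longleftrightarrow> closed_conf X \<and> shift ` X = X"

definition is_CA :: "'a config set \<Rightarrow> ('a config \<Rightarrow> 'a config) \<Rightarrow> nat \<Rightarrow> ('a list \<Rightarrow> 'a) \<Rightarrow> bool" where
  "is_CA X F r f \<longleftrightarrow> F ` X \<subseteq> X \<and>
     (\<forall>x\<in>X. \<forall>i. F x i = f (window x (i - int r) (i + int r)))"

definition blocking_word :: "'a config set \<Rightarrow> ('a config \<Rightarrow> 'a config) \<Rightarrow> nat \<Rightarrow> 'a list \<Rightarrow> bool" where
  "blocking_word X F r B \<longleftrightarrow> (\<exists>k0::nat. length B = 2 * k0 + 1 \<and>
     (\<exists>i::nat. 2 * i + 1 \<ge> r \<and> (\<exists>v :: nat \<Rightarrow> 'a list. (\<forall>n. length (v n) = 2 * i + 1) \<and>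
        (\<forall>x\<in>X. window x (- int k0) (int k0) = B \<longrightarrow>
           (\<forall>n\<ge>1. window ((F ^^ n) x) (- int i) (int i) = v n)))))"

definition equicont_point :: "'a config set \<Rightarrow> ('a config \<Rightarrow> 'a config) \<Rightarrow> 'a config \<Rightarrow> bool" where
  "equicont_point X F x \<longleftrightarrow> x \<in> X \<and> (\<forall>\<epsilon>>0. \<exists>\<eta>>0. \<forall>y\<in>X. cdist x y \<le> \<eta> \<longrightarrow>
      (\<forall>i>0. cdist ((F ^^ i) x) ((F ^^ i) y) \<le> \<epsilon>))"

text \<open>Borel sigma-algebra of the product topology on X (product of discrete spaces, restricted to X).\<close>
definition borel_conf :: "'a config set \<Rightarrow> 'a config measure" where
  "borel_conf X = restrict_space (PiM UNIV (\<lambda>_. count_space UNIV)) X"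

definition borel_prob_on :: "'a config set \<Rightarrow> 'a config measure \<Rightarrow> bool" where
  "borel_prob_on X \<mu> \<longleftrightarrow> prob_space \<mu> \<and> sets \<mu> = sets (borel_conf X) \<and> space \<mu> = X"

definition shift_ergodic :: "'a config set \<Rightarrow> 'a config measure \<Rightarrow> bool" where
  "shift_ergodic X \<mu> \<longleftrightarrow>
     (\<forall>E\<in>sets \<mu>. measure \<mu> {x\<in>X. shift x \<in> E} = measure \<mu> E) \<and>
     (\<forall>E\<in>sets \<mu>. {x\<in>X. shift x \<in> E} = E \<longrightarrow> measure \<mu> E = 0 \<or> measure \<mu> E = 1)"

definition equicont_measure :: "'a config set \<Rightarrow> ('a config \<Rightarrow> 'a config) \<Rightarrow> 'a config measure \<Rightarrow> bool" where
  "equicont_measure X F \<mu> \<longleftrightarrow> (AE x in \<mu>. equicont_point X F x)"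

definition occurs_between :: "'a config set \<Rightarrow> 'a list \<Rightarrow> 'a config \<Rightarrow> int \<Rightarrow> int \<Rightarrow> bool" where
  "occurs_between X B x a b \<longleftrightarrow> (\<exists>t. a \<le> t \<and> t + int (length B) - 1 \<le> b \<and> x \<in> cyl X B t)"

definition Rset :: "'a config set \<Rightarrow> 'a list \<Rightarrow> nat \<Rightarrow> nat \<Rightarrow> 'a config set" where
  "Rset X B k m = {x \<in> X. occurs_between X B x (- int m - int k) (- int k)
                        \<and> occurs_between X B x (int k) (int m + int k)}"

definition ult_period :: "(nat \<Rightarrow> 'b) \<Rightarrow> nat" where
  "ult_period s = (LEAST p. p > 0 \<and> (\<exists>N. \<forall>n\<ge>N. s (n + p) = s n))"

definition ult_preperiod :: "(nat \<Rightarrow> 'b) \<Rightarrow> nat" where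
  "ult_preperiod s = (LEAST N. \<forall>n\<ge>N. s (n + ult_period s) = s n)"

definition orbit_window :: "('a config \<Rightarrow> 'a config) \<Rightarrow> 'a config \<Rightarrow> nat \<Rightarrow> nat \<Rightarrow> 'a list" where
  "orbit_window F x k n = window ((F ^^ n) x) (- int k) (int k)"

definition pkm :: "'a config set \<Rightarrow> ('a config \<Rightarrow> 'a config) \<Rightarrow> 'a list \<Rightarrow> nat \<Rightarrow> nat \<Rightarrow> nat" where
  "pkm X F B k m = Lcm ((\<lambda>x. ult_period (orbit_window F x k)) ` Rset X B k m)"

definition ppkm :: "'a config set \<Rightarrow> ('a config \<Rightarrow> 'a config) \<Rightarrow> 'a list \<Rightarrow> nat \<Rightarrow> nat \<Rightarrow> nat" where
  "ppkm X F B k m = Sup ((\<lambda>x. ult_preperiod (orbit_window F x k)) ` Rset X B k m)"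

definition Wm :: "'a config set \<Rightarrow> ('a config \<Rightarrow> 'a config) \<Rightarrow> 'a config measure \<Rightarrow> 'a list \<Rightarrow> nat \<Rightarrow> 'a list \<Rightarrow> nat \<Rightarrow> real" where
  "Wm X F \<mu> B k u m = (1 / real (pkm X F B k m)) *
     (\<Sum>i<pkm X F B k m. measure \<mu> (Rset X B k m \<inter>
        {x \<in> X. (F ^^ (i + ppkm X F B k m)) x \<in> cyl X u (- int k)}))"

end

theory Submission
  imports Defs
begin

text \<open>Shift invariance gives all cylinders of B at positions j (r + 1) the same positive measure,
  so some configuration contains three of these occurrences. The cells forced by an occurrence of
  B form a wall that no information crosses; with three walls, the window between the outer ones
  evolves autonomously, so the wall sequence v is ultimately periodic. Then the column
  (F^n x (-k, k))_n of every x in R(k, m) is ultimately periodic, with finitely many columns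
  overall, and W_m is the integral over R(k, m) of the frequency of u in the periodic part of the
  column of x. The integrand does not depend on m, and R(k, m) increases with m.\<close>

lemma three_less_elements:
  fixes A :: "'b::linorder set"
  assumes "finite A" "2 < card A"
  shows "\<exists>a\<in>A. \<exists>b\<in>A. \<exists>c\<in>A. a < b \<and> b < c"
proof -
  define xs where "xs = sorted_list_of_set A"
  have len: "2 < length xs" and sorted: "sorted_wrt (<) xs" and set: "set xs = A"
    using assms by (simp_all add: xs_def)
  have less: "xs ! 0 < xs ! 1" "xs ! 1 < xs ! 2"
    using len sorted by (auto intro: sorted_wrt_nth_less)
  have mem: "xs ! j \<in> A" if "j < length xs" for j
    using that set nth_mem by blast
  have "xs ! 0 \<in> A" "xs ! 1 \<in> A" "xs ! 2 \<in> A"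
    using len by (auto intro!: mem)
  then show ?thesis
    using less by blast
qed

lemma finite_image_if_factors:
  assumes "finite (h ` S)" and "\<And>x y. x \<in> S \<Longrightarrow> y \<in> S \<Longrightarrow> h x = h y \<Longrightarrow> g x = g y"
  shows "finite (g ` S)"
proof -
  have "g ` S \<subseteq> (\<lambda>w. g (inv_into S h w)) ` h ` S"
  proof
    fix z assume "z \<in> g ` S"
    then obtain x where x: "x \<in> S" "z = g x" by blast
    then have "g (inv_into S h (h x)) = g x"
      using assms(2) inv_into_into f_inv_into_f by (metis imageI)
    then show "z \<in> (\<lambda>w. g (inv_into S h w)) ` h ` S"
      using x by (metis imageI)
  qed
  then show ?thesis
    using assms(1) finite_surj by blast
qed

subsection \<open>Ultimately periodic sequences\<close>

definition ult_periodic :: "(nat \<Rightarrow> 'b) \<Rightarrow> bool" where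
  "ult_periodic s \<longleftrightarrow> (\<exists>p>0. \<exists>N. \<forall>n\<ge>N. s (n + p) = s n)"

lemma ult_period_pos: "ult_periodic s \<Longrightarrow> 0 < ult_period s"
  unfolding ult_periodic_def ult_period_def by (rule conjunct1[OF LeastI_ex])

lemma ult_periodic_from_preperiod:
  assumes "ult_periodic s" "ult_preperiod s \<le> n"
  shows "s (n + ult_period s) = s n"
proof -
  have "\<exists>N. \<forall>n\<ge>N. s (n + ult_period s) = s n"
    using assms(1) unfolding ult_periodic_def ult_period_def by (rule conjunct2[OF LeastI_ex])
  then have "\<forall>n\<ge>ult_preperiod s. s (n + ult_period s) = s n"
    unfolding ult_preperiod_def by (rule LeastI_ex)
  then show ?thesis using assms(2) by blast
qed

lemma periodic_add_mult:
  fixes s :: "nat \<Rightarrow> 'b"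
  assumes "\<forall>n\<ge>N. s (n + p) = s n" "N \<le> n"
  shows "s (n + d * p) = s n"
proof (induction d)
  case (Suc d)
  have "s (n + Suc d * p) = s ((n + d * p) + p)" by (simp add: algebra_simps)
  also have "\<dots> = s (n + d * p)" using assms by simp
  finally show ?case using Suc by simp
qed simp

lemma ult_periodic_factor:
  assumes "ult_periodic w" and "\<And>a b. N \<le> a \<Longrightarrow> N \<le> b \<Longrightarrow> w a = w b \<Longrightarrow> g a = g b"
  shows "ult_periodic g"
proof -
  obtain p N0 where "0 < p" "\<forall>n\<ge>N0. w (n + p) = w n"
    using assms(1) by (auto simp: ult_periodic_def)
  then have "\<forall>n\<ge>max N N0. g (n + p) = g n"
    using assms(2) by simp
  then show ?thesis using \<open>0 < p\<close> unfolding ult_periodic_def by blast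
qed

text \<open>A finite range forces a repetition along the progression N + j P, which the propagation
  hypothesis turns into a period.\<close>
lemma ult_periodic_by_pigeonhole:
  assumes fin: "finite (range w)" and "0 < P"
    and step: "\<And>a d. N \<le> a \<Longrightarrow> w a = w (a + d * P) \<Longrightarrow> w (Suc a) = w (Suc a + d * P)"
  shows "ult_periodic w"
proof -
  have "\<not> inj (\<lambda>j. w (N + j * P))"
    using finite_subset[OF _ fin] finite_imageD infinite_UNIV_nat by (metis image_subsetI rangeI)
  then obtain a b where "a < b" and eq: "w (N + a * P) = w (N + b * P)"
    unfolding inj_def by (metis linorder_neq_iff)
  define a0 d where "a0 = N + a * P" and "d = b - a"
  have base: "w a0 = w (a0 + d * P)"
    using eq \<open>a < b\<close> by (simp add: a0_def d_def algebra_simps diff_mult_distrib)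
  have rep: "w (a0 + l) = w (a0 + l + d * P)" for l
  proof (induction l)
    case (Suc l)
    then show ?case using step[of "a0 + l" d] by (simp add: a0_def)
  qed (simp add: base)
  have "\<forall>n\<ge>a0. w (n + d * P) = w n"
    using rep by (metis le_add_diff_inverse)
  moreover have "0 < d * P" using \<open>a < b\<close> \<open>0 < P\<close> by (simp add: d_def)
  ultimately show ?thesis unfolding ult_periodic_def by blast
qed

lemma average_over_multiple_of_period:
  fixes g :: "'b \<Rightarrow> real"
  assumes "0 < p" and per: "\<forall>n\<ge>N. s (n + p) = s n" and "p dvd P" "0 < P" "N \<le> M"
  shows "1 / real P * (\<Sum>i<P. g (s (i + M))) = 1 / real p * (\<Sum>i<p. g (s (i + N)))"
proof -
  define T where "T a = (\<Sum>i<p. g (s (i + a)))" for a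
  obtain p' where p': "p = Suc p'" using \<open>0 < p\<close> gr0_implies_Suc by blast
  have T_Suc: "T (Suc a) = T a" if "N \<le> a" for a
  proof -
    have "T a = g (s a) + (\<Sum>i<p'. g (s (Suc i + a)))"
      unfolding T_def p' by (subst sum.lessThan_Suc_shift) simp
    moreover have "T (Suc a) = (\<Sum>i<p'. g (s (i + Suc a))) + g (s (p' + Suc a))"
      unfolding T_def p' by simp
    moreover have "s (p' + Suc a) = s a" using per that p' by (metis add.commute add_Suc_right)
    ultimately show ?thesis by simp
  qed
  have T_const: "T a = T N" if "N \<le> a" for a
    using that by (induction a rule: dec_induct) (simp_all add: T_Suc)
  obtain c where c: "P = c * p" using \<open>p dvd P\<close> by (metis dvd_def mult.commute)
  have block: "(\<Sum>i\<in>{j * p..<j * p + p}. f i) = (\<Sum>i<p. f (i + j * p))" for f :: "nat \<Rightarrow> real" and j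
  proof -
    have "{j * p..<j * p + p} = {0 + j * p..<p + j * p}" by (simp add: add.commute)
    then show ?thesis by (simp only: sum.shift_bounds_nat_ivl atLeast0LessThan)
  qed
  have "(\<Sum>i<P. g (s (i + M))) = (\<Sum>j<c. \<Sum>i<p. g (s (i + j * p + M)))"
    by (simp only: c sum.nat_group[symmetric] block)
  also have "\<dots> = (\<Sum>j<c. T (j * p + M))"
    by (simp add: T_def add.assoc)
  also have "\<dots> = (\<Sum>j<c. T N)"
    by (rule sum.cong[OF refl], rule T_const) (use \<open>N \<le> M\<close> in simp)
  finally show ?thesis using c \<open>0 < P\<close> by (simp add: T_def)
qed

lemma Lcm_ult_period_pos:
  assumes "finite S" "\<And>s. s \<in> S \<Longrightarrow> ult_periodic s"
  shows "0 < Lcm (ult_period ` S)"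
proof -
  have "0 < ult_period s" if "s \<in> S" for s
    using assms(2)[OF that] by (rule ult_period_pos)
  then have "0 \<notin> ult_period ` S" by (metis image_iff less_irrefl)
  then show ?thesis using Lcm_0_iff[OF finite_imageI[OF assms(1)], of ult_period] by simp
qed

subsection \<open>Windows, cylinders and measurability\<close>

lemma window_eq_iff: "window x p q = window y p q \<longleftrightarrow> (\<forall>j\<in>{p..q}. x j = y j)"
  by (simp add: window_def map_eq_conv)

lemma window_eq_subinterval:
  "window x p q = window y p q \<Longrightarrow> p \<le> p' \<Longrightarrow> q' \<le> q \<Longrightarrow> window x p' q' = window y p' q'"
  by (auto simp: window_eq_iff)

lemma length_window [simp]: "length (window x p q) = nat (q - p + 1)"
  by (simp add: window_def)

lemma nth_window: "p \<le> j \<Longrightarrow> j \<le> q \<Longrightarrow> window x p q ! nat (j - p) = x j"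
  by (simp add: window_def)

lemma nth_window': "j < nat (q - p + 1) \<Longrightarrow> window x p q ! j = x (p + int j)"
  by (simp add: window_def)

lemma mem_cyl_iff_window: "y \<in> cyl X u t \<longleftrightarrow> y \<in> X \<and> window y t (t + int (length u) - 1) = u"
proof -
  have "{1..length u} = Suc ` {..<length u}"
    by (simp add: atLeast1_atMost_eq_remove0 image_Suc_lessThan)
  then have "(\<forall>j\<in>{1..length u}. y (t + int j - 1) = u ! (j - 1)) \<longleftrightarrow> (\<forall>j<length u. y (t + int j) = u ! j)"
    by (auto simp: algebra_simps)
  moreover have "window y t (t + int (length u) - 1) = u \<longleftrightarrow> (\<forall>j<length u. y (t + int j) = u ! j)"
    by (auto simp: list_eq_iff_nth_eq nth_window')
  ultimately show ?thesis
    by (simp add: cyl_def)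
qed

lemma occurs_between_iff:
  "occurs_between X B x a b \<longleftrightarrow> (\<exists>t\<in>{a..b - int (length B) + 1}. x \<in> cyl X B t)"
  by (auto simp: occurs_between_def)

lemma Rset_eq_UN:
  "Rset X B k m = (\<Union>t1\<in>{- int m - int k..- int k - int (length B) + 1}.
     \<Union>t2\<in>{int k..int m + int k - int (length B) + 1}. cyl X B t1 \<inter> cyl X B t2)"
  by (auto simp: Rset_def occurs_between_iff cyl_def)

lemma Rset_mono: "m \<le> m' \<Longrightarrow> Rset X B k m \<subseteq> Rset X B k m'"
  unfolding Rset_eq_UN by fastforce

lemma shift_preimage_cyl:
  assumes "shift ` X \<subseteq> X"
  shows "{x \<in> X. shift x \<in> cyl X B t} = cyl X B (t + 1)"
  using assms by (auto simp: cyl_def shift_def algebra_simps)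

lemma space_borel_conf [simp]: "space (borel_conf X) = X"
  by (simp add: borel_conf_def space_restrict_space space_PiM)

lemma measurable_coordinate: "(\<lambda>x. x j) \<in> borel_conf X \<rightarrow>\<^sub>M count_space UNIV"
  unfolding borel_conf_def
  by (intro measurable_restrict_space1 measurable_component_singleton) simp

lemma measurable_map_coordinates:
  fixes X :: "('a::countable) config set"
  shows "(\<lambda>x. map x L) \<in> borel_conf X \<rightarrow>\<^sub>M count_space UNIV"
proof (induction L)
  case (Cons a L)
  have "(\<lambda>x. (\<lambda>c y. c # map y L) (x a) x) \<in> borel_conf X \<rightarrow>\<^sub>M count_space UNIV"
  proof (rule measurable_compose_countable'[where I=UNIV and f="\<lambda>c y. c # map y L" and g="\<lambda>x. x a"])
    fix c :: 'a
    show "(\<lambda>x. c # map x L) \<in> borel_conf X \<rightarrow>\<^sub>M count_space UNIV"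
      using measurable_compose[OF Cons.IH measurable_count_space[of "(#) c" UNIV]] by simp
  qed (auto intro: measurable_coordinate)
  then show ?case by simp
qed simp

lemma measurable_window:
  fixes X :: "('a::countable) config set"
  shows "(\<lambda>x. window x p q) \<in> borel_conf X \<rightarrow>\<^sub>M count_space UNIV"
  unfolding window_def by (rule measurable_map_coordinates)

lemma cyl_in_borel_conf:
  fixes X :: "('a::countable) config set"
  shows "cyl X u t \<in> sets (borel_conf X)"
proof -
  have "cyl X u t = (\<lambda>x. window x t (t + int (length u) - 1)) -` {u} \<inter> space (borel_conf X)"
    by (auto simp: mem_cyl_iff_window)
  also have "\<dots> \<in> sets (borel_conf X)"
    by (rule measurable_sets[OF measurable_window]) simp
  finally show ?thesis .
qed

lemma Rset_in_borel_conf: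
  fixes X :: "('a::countable) config set"
  shows "Rset X B k m \<in> sets (borel_conf X)"
  unfolding Rset_eq_UN by (intro sets.finite_UN sets.Int cyl_in_borel_conf) auto

subsection \<open>Recurrence of a set of positive measure\<close>

lemma (in prob_space) sum_prob_le_multiplicity:
  fixes N :: nat
  assumes "\<And>j. j < N \<Longrightarrow> A j \<in> events"
    and "\<And>x. x \<in> space M \<Longrightarrow> card {j. j < N \<and> x \<in> A j} \<le> c"
  shows "(\<Sum>j<N. prob (A j)) \<le> c"
proof -
  have int: "integrable M (indicator (A j) :: _ \<Rightarrow> real)" if "j < N" for j
    using assms(1)[OF that] by (intro integrable_real_indicator) (auto simp: less_top[symmetric])
  have count: "(\<Sum>j<N. indicator (A j) x) = real (card {j. j < N \<and> x \<in> A j})" for x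
  proof -
    have "{j. j < N \<and> x \<in> A j} = {..<N} \<inter> {j. x \<in> A j}" by auto
    then show ?thesis by (simp add: indicator_def)
  qed
  have sub: "A j \<subseteq> space M" if "j < N" for j
    using assms(1)[OF that] sets.sets_into_space by blast
  have "(\<Sum>j<N. prob (A j)) = (\<Sum>j<N. \<integral>x. indicator (A j) x \<partial>M)"
    using sub by (simp add: Int_absorb2)
  also have "\<dots> = (\<integral>x. (\<Sum>j<N. indicator (A j) x) \<partial>M)"
    using int by (simp add: Bochner_Integration.integral_sum)
  also have "\<dots> \<le> (\<integral>x. real c \<partial>M)"
    using int assms(2) by (intro integral_mono Bochner_Integration.integrable_sum) (auto simp: count)
  also have "\<dots> = real c"
    unfolding lebesgue_integral_const prob_space by simp
  finally show ?thesis .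
qed

lemma (in prob_space) three_events_intersect:
  fixes A :: "nat \<Rightarrow> 'a set"
  assumes "\<And>j. A j \<in> events" "\<And>j. prob (A j) = \<beta>" "0 < \<beta>"
  shows "\<exists>x j1 j2 j3. j1 < j2 \<and> j2 < j3 \<and> x \<in> A j1 \<and> x \<in> A j2 \<and> x \<in> A j3"
proof (rule ccontr)
  assume none: "\<not> ?thesis"
  define N where "N = nat \<lceil>3 / \<beta>\<rceil>"
  have "3 / \<beta> \<le> real N" unfolding N_def by linarith
  then have "3 \<le> real N * \<beta>" using \<open>0 < \<beta>\<close> by (simp add: field_simps)
  moreover have "card {j. j < N \<and> x \<in> A j} \<le> 2" for x
  proof (rule ccontr)
    assume "\<not> ?thesis"
    then obtain a b c where "a < b" "b < c" "x \<in> A a" "x \<in> A b" "x \<in> A c"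
      using three_less_elements[of "{j. j < N \<and> x \<in> A j}"] by auto
    then show False using none by blast
  qed
  then have "(\<Sum>j<N. prob (A j)) \<le> real 2"
    by (intro sum_prob_le_multiplicity assms(1))
  moreover have "(\<Sum>j<N. prob (A j)) = real N * \<beta>"
    using assms(2) by simp
  ultimately show False by linarith
qed

subsection \<open>Cellular automata with a blocking word\<close>

definition translate :: "int \<Rightarrow> 'a config \<Rightarrow> 'a config" where
  "translate a x = (\<lambda>j. x (j + a))"

lemma window_translate: "window (translate a x) p q = window x (p + a) (q + a)"
  by (rule nth_equalityI) (auto simp: nth_window' translate_def algebra_simps)

lemma finite_windows:
  fixes S :: "('a::finite) config set"
  shows "finite ((\<lambda>x. window x p q) ` S)"
  by (rule finite_subset[OF _ finite_lists_length_eq[of UNIV "nat (q - p + 1)"]]) auto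

definition orbit_freq :: "('a config \<Rightarrow> 'a config) \<Rightarrow> nat \<Rightarrow> 'a list \<Rightarrow> 'a config \<Rightarrow> real" where
  "orbit_freq F k u x = (let s = orbit_window F x k in
     1 / real (ult_period s) * (\<Sum>i<ult_period s. of_bool (s (i + ult_preperiod s) = u)))"

lemma orbit_freq_nonneg: "0 \<le> orbit_freq F k u x"
  by (simp add: orbit_freq_def Let_def sum_nonneg)

locale blocking_ca =
  fixes X :: "('a::finite) config set" and F :: "'a config \<Rightarrow> 'a config"
    and r :: nat and f :: "'a list \<Rightarrow> 'a"
    and B :: "'a list" and k0 i :: nat and v :: "nat \<Rightarrow> 'a list"
  assumes shift_image: "shift ` X = X"
    and CA: "is_CA X F r f"
    and length_B: "length B = 2 * k0 + 1"
    and radius_le: "r \<le> 2 * i + 1"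
    and blocking: "\<And>x n. x \<in> X \<Longrightarrow> window x (- int k0) (int k0) = B \<Longrightarrow> 1 \<le> n \<Longrightarrow>
      window ((F ^^ n) x) (- int i) (int i) = v n"
begin

lemma translate_in: "x \<in> X \<Longrightarrow> translate a x \<in> X"
proof (induction a rule: int_induct[where k=0])
  case base
  then show ?case by (simp add: translate_def)
next
  case (step1 a)
  then have "shift (translate a x) \<in> X" using shift_image by blast
  then show ?case by (simp add: shift_def translate_def ac_simps)
next
  case (step2 a)
  then obtain y where y: "y \<in> X" "shift y = translate a x"
    using shift_image by (metis imageE)
  have "y j = x (j + (a - 1))" for j
    using fun_cong[OF y(2), of "j - 1"] by (simp add: shift_def translate_def algebra_simps)
  then have "y = translate (a - 1) x" by (simp add: translate_def fun_eq_iff)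
  then show ?case using y(1) by simp
qed

lemma F_in: "x \<in> X \<Longrightarrow> F x \<in> X"
  using CA by (auto simp: is_CA_def)

lemma iterate_in: "x \<in> X \<Longrightarrow> (F ^^ n) x \<in> X"
  by (induction n) (auto simp: F_in)

lemma F_local: "x \<in> X \<Longrightarrow> F x j = f (window x (j - int r) (j + int r))"
  using CA by (auto simp: is_CA_def)

lemma F_translate:
  assumes "x \<in> X"
  shows "F (translate a x) = translate a (F x)"
proof
  fix j
  have "F (translate a x) j = f (window x (j + a - int r) (j + a + int r))"
    using assms by (simp add: F_local translate_in window_translate algebra_simps)
  also have "\<dots> = translate a (F x) j"
    using assms by (simp add: F_local translate_def)
  finally show "F (translate a x) j = translate a (F x) j" .
qed

lemma iterate_translate: "x \<in> X \<Longrightarrow> (F ^^ n) (translate a x) = translate a ((F ^^ n) x)"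
  by (induction n) (auto simp: F_translate iterate_in)

lemma iterate_Suc_eq_if_agree:
  assumes "x \<in> X" "y \<in> X" and "\<forall>j'\<in>{j - int r..j + int r}. (F ^^ a) x j' = (F ^^ b) y j'"
  shows "(F ^^ Suc a) x j = (F ^^ Suc b) y j"
proof -
  have "window ((F ^^ a) x) (j - int r) (j + int r) = window ((F ^^ b) y) (j - int r) (j + int r)"
    using assms(3) window_eq_iff by blast
  then show ?thesis using assms(1,2) by (simp add: F_local iterate_in)
qed

lemma measurable_iterate: "F ^^ n \<in> borel_conf X \<rightarrow>\<^sub>M borel_conf X"
proof -
  have "(\<lambda>x. F x j) \<in> borel_conf X \<rightarrow>\<^sub>M count_space UNIV" for j
    by (rule measurable_cong[THEN iffD1, OF _ measurable_compose[OF measurable_window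
          measurable_count_space[of f UNIV]]]) (simp add: F_local)
  then have "F \<in> borel_conf X \<rightarrow>\<^sub>M Pi\<^sub>M UNIV (\<lambda>_. count_space UNIV)"
    by (intro measurable_PiM_single') (auto simp: space_PiM)
  then have "F \<in> borel_conf X \<rightarrow>\<^sub>M borel_conf X"
    unfolding borel_conf_def[of X]
    by (intro measurable_restrict_space2) (auto simp: F_in space_restrict_space space_PiM)
  then show ?thesis by (induction n) (auto intro: measurable_compose)
qed

lemma iterate_preimage_cyl_in_borel_conf: "{x \<in> X. (F ^^ n) x \<in> cyl X u t} \<in> sets (borel_conf X)"
proof -
  have "{x \<in> X. (F ^^ n) x \<in> cyl X u t} = (F ^^ n) -` cyl X u t \<inter> space (borel_conf X)"
    by auto
  then show ?thesis
    using measurable_sets[OF measurable_iterate cyl_in_borel_conf] by simp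
qed

lemma iterate_in_cyl_iff:
  assumes "x \<in> X" "length u = 2 * k + 1"
  shows "(F ^^ n) x \<in> cyl X u (- int k) \<longleftrightarrow> orbit_window F x k n = u"
  using assms by (simp add: mem_cyl_iff_window iterate_in orbit_window_def)

lemma wall_window:
  assumes "x \<in> cyl X B t" "1 \<le> n"
  shows "window ((F ^^ n) x) (t + int k0 - int i) (t + int k0 + int i) = v n"
proof -
  have x: "x \<in> X" "window x t (t + 2 * int k0) = B"
    using assms(1) length_B by (auto simp: mem_cyl_iff_window algebra_simps)
  have "window (translate (t + int k0) x) (- int k0) (int k0) = B"
    using x(2) by (simp add: window_translate algebra_simps)
  then have "window ((F ^^ n) (translate (t + int k0) x)) (- int i) (int i) = v n"
    using blocking translate_in x(1) assms(2) by blast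
  then show ?thesis
    by (simp add: iterate_translate x(1) window_translate algebra_simps)
qed

lemma wall_value:
  assumes "x \<in> cyl X B t" "1 \<le> n" "t + int k0 - int i \<le> j" "j \<le> t + int k0 + int i"
  shows "(F ^^ n) x j = v n ! nat (j - (t + int k0 - int i))"
  using wall_window[OF assms(1,2)] nth_window[OF assms(3,4), of "(F ^^ n) x"] by simp

lemma wall_value_Suc_eq:
  assumes x: "x \<in> cyl X B t"
    and agree: "\<forall>j\<in>{t + int k0 - int i - int r..t + int k0 + int i + int r}. (F ^^ a) x j = (F ^^ b) x j"
  shows "v (Suc a) = v (Suc b)"
proof -
  have "x \<in> X" using x by (simp add: cyl_def)
  then have "\<forall>j\<in>{t + int k0 - int i..t + int k0 + int i}. (F ^^ Suc a) x j = (F ^^ Suc b) x j"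
    using agree by (intro ballI iterate_Suc_eq_if_agree) auto
  then have "window ((F ^^ Suc a) x) (t + int k0 - int i) (t + int k0 + int i) =
      window ((F ^^ Suc b) x) (t + int k0 - int i) (t + int k0 + int i)"
    by (simp only: window_eq_iff)
  then show ?thesis
    using wall_window[OF x, of "Suc a"] wall_window[OF x, of "Suc b"] by (simp del: funpow.simps)
qed

definition between_walls :: "int \<Rightarrow> int \<Rightarrow> int set" where
  "between_walls t1 t2 = {t1 + int k0 - int i..t2 + int k0 + int i}"

text \<open>Since r \<le> 2 i + 1, no information crosses the 2 i + 1 cells forced by an occurrence of B,
  so between two walls the next state depends only on the current window and on v.\<close>

lemma agree_between_walls_Suc:
  assumes x: "x \<in> cyl X B t1" "x \<in> cyl X B t2" and y: "y \<in> cyl X B t1" "y \<in> cyl X B t2"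
    and agree: "\<forall>j\<in>between_walls t1 t2. (F ^^ a) x j = (F ^^ b) y j"
    and "v (Suc a) = v (Suc b)"
  shows "\<forall>j\<in>between_walls t1 t2. (F ^^ Suc a) x j = (F ^^ Suc b) y j"
proof
  fix j assume j: "j \<in> between_walls t1 t2"
  have "x \<in> X" "y \<in> X" using x(1) y(1) by (auto simp: cyl_def)
  consider "j \<le> t1 + int k0 + int i" | "t2 + int k0 - int i \<le> j"
    | "t1 + int k0 + int i < j" "j < t2 + int k0 - int i"
    by linarith
  then show "(F ^^ Suc a) x j = (F ^^ Suc b) y j"
  proof cases
    case 1
    then have "(F ^^ Suc a) x j = v (Suc a) ! nat (j - (t1 + int k0 - int i))"
      "(F ^^ Suc b) y j = v (Suc b) ! nat (j - (t1 + int k0 - int i))"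
      using j by (auto simp: between_walls_def simp del: funpow.simps intro!: wall_value x y)
    then show ?thesis using \<open>v (Suc a) = v (Suc b)\<close> by (simp del: funpow.simps)
  next
    case 2
    then have "(F ^^ Suc a) x j = v (Suc a) ! nat (j - (t2 + int k0 - int i))"
      "(F ^^ Suc b) y j = v (Suc b) ! nat (j - (t2 + int k0 - int i))"
      using j by (auto simp: between_walls_def simp del: funpow.simps intro!: wall_value x y)
    then show ?thesis using \<open>v (Suc a) = v (Suc b)\<close> by (simp del: funpow.simps)
  next
    case 3
    then show ?thesis
      using agree radius_le \<open>x \<in> X\<close> \<open>y \<in> X\<close>
      by (intro iterate_Suc_eq_if_agree) (auto simp: between_walls_def)
  qed
qed

lemma agree_between_walls:
  assumes "x \<in> cyl X B t1" "x \<in> cyl X B t2" "y \<in> cyl X B t1" "y \<in> cyl X B t2"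
    and "\<forall>j\<in>between_walls t1 t2. x j = y j"
  shows "\<forall>j\<in>between_walls t1 t2. (F ^^ n) x j = (F ^^ n) y j"
proof (induction n)
  case 0
  then show ?case using assms(5) by simp
next
  case (Suc n)
  then show ?case using agree_between_walls_Suc[OF assms(1-4)] by blast
qed

text \<open>The window between two walls evolves by a deterministic rule driven by the wall sequence v;
  with a third wall in the middle, the wall values are themselves determined by that window.\<close>

lemma ult_periodic_v_if_three_walls:
  assumes x: "x \<in> cyl X B t0" "x \<in> cyl X B t1" "x \<in> cyl X B t2"
    and "t0 + int r \<le> t1" "t1 + int r \<le> t2"
  shows "ult_periodic v"
proof -
  define w where "w n = window ((F ^^ n) x) (t0 + int k0 - int i) (t2 + int k0 + int i)" for n
  have w_eq_iff: "w a = w b \<longleftrightarrow> (\<forall>j\<in>between_walls t0 t2. (F ^^ a) x j = (F ^^ b) x j)" for a b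
    by (simp add: w_def window_eq_iff between_walls_def)
  have "finite (range w)"
    using finite_windows[of _ _ "range (\<lambda>n. (F ^^ n) x)"] by (simp add: w_def image_image)
  moreover have "w (Suc a) = w (Suc a + d * 1)" if "w a = w (a + d * 1)" for a d
  proof -
    have agree: "\<forall>j\<in>between_walls t0 t2. (F ^^ a) x j = (F ^^ (a + d)) x j"
      using that w_eq_iff by simp
    then have "v (Suc a) = v (Suc (a + d))"
      using assms(4,5) by (intro wall_value_Suc_eq[OF x(2)]) (auto simp: between_walls_def)
    then show ?thesis
      using agree_between_walls_Suc[OF x(1,3,1,3) agree] w_eq_iff by simp
  qed
  ultimately have "ult_periodic w"
    by (intro ult_periodic_by_pigeonhole[where P=1 and N=0]) auto
  then show ?thesis
  proof (rule ult_periodic_factor[where N=1])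
    fix a b assume "1 \<le> a" "1 \<le> b" "w a = w b"
    from \<open>w a = w b\<close> have "window ((F ^^ a) x) (t1 + int k0 - int i) (t1 + int k0 + int i) =
        window ((F ^^ b) x) (t1 + int k0 - int i) (t1 + int k0 + int i)"
      unfolding w_def by (rule window_eq_subinterval) (use assms(4,5) in simp_all)
    then show "v a = v b"
      using wall_window[OF x(2)] \<open>1 \<le> a\<close> \<open>1 \<le> b\<close> by simp
  qed
qed

lemma ult_periodic_orbit_window_if_walls:
  assumes "ult_periodic v" and x: "x \<in> cyl X B t1" "x \<in> cyl X B t2"
    and center: "t1 + int k0 - int i \<le> - int k" "int k \<le> t2 + int k0 + int i"
  shows "ult_periodic (orbit_window F x k)"
proof -
  obtain P N where "0 < P" and v_per: "\<forall>n\<ge>N. v (n + P) = v n"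
    using assms(1) by (auto simp: ult_periodic_def)
  define w where "w n = window ((F ^^ n) x) (t1 + int k0 - int i) (t2 + int k0 + int i)" for n
  have w_eq_iff: "w a = w b \<longleftrightarrow> (\<forall>j\<in>between_walls t1 t2. (F ^^ a) x j = (F ^^ b) x j)" for a b
    by (simp add: w_def window_eq_iff between_walls_def)
  have "finite (range w)"
    using finite_windows[of _ _ "range (\<lambda>n. (F ^^ n) x)"] by (simp add: w_def image_image)
  moreover have "w (Suc a) = w (Suc a + d * P)" if "N \<le> a" "w a = w (a + d * P)" for a d
  proof -
    have "v (Suc a) = v (Suc (a + d * P))"
      using periodic_add_mult[OF v_per, of "Suc a" d] that(1) by simp
    then show ?thesis
      using agree_between_walls_Suc[OF x x] that(2) w_eq_iff by simp
  qed
  ultimately have "ult_periodic w"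
    using \<open>0 < P\<close> by (intro ult_periodic_by_pigeonhole) auto
  then show ?thesis
    by (rule ult_periodic_factor[where N=0])
      (use center in \<open>auto simp: w_def orbit_window_def intro: window_eq_subinterval\<close>)
qed

lemma orbit_window_eq_if_walls:
  assumes "x \<in> cyl X B t1" "x \<in> cyl X B t2" "y \<in> cyl X B t1" "y \<in> cyl X B t2"
    and "t1 + int k0 - int i \<le> - int k" "int k \<le> t2 + int k0 + int i"
    and "window x (t1 + int k0 - int i) (t2 + int k0 + int i) =
      window y (t1 + int k0 - int i) (t2 + int k0 + int i)"
  shows "orbit_window F x k = orbit_window F y k"
proof
  fix n
  have "\<forall>j\<in>between_walls t1 t2. (F ^^ n) x j = (F ^^ n) y j"
    using assms(7) by (intro agree_between_walls[OF assms(1-4)])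
      (simp add: window_eq_iff between_walls_def)
  then show "orbit_window F x k n = orbit_window F y k n"
    using assms(5,6) by (auto simp: orbit_window_def window_eq_iff between_walls_def)
qed

lemma Rset_walls_enclose_center:
  assumes "t1 \<in> {- int m - int k..- int k - int (length B) + 1}"
    and "t2 \<in> {int k..int m + int k - int (length B) + 1}"
  shows "t1 + int k0 - int i \<le> - int k" "int k \<le> t2 + int k0 + int i"
  using assms length_B by auto

lemma finite_orbit_windows_Rset: "finite ((\<lambda>x. orbit_window F x k) ` Rset X B k m)"
proof -
  have "finite ((\<lambda>x. orbit_window F x k) ` (cyl X B t1 \<inter> cyl X B t2))"
    if "t1 \<in> {- int m - int k..- int k - int (length B) + 1}"
      and "t2 \<in> {int k..int m + int k - int (length B) + 1}" for t1 t2
    by (rule finite_image_if_factors[OF finite_windows], rule orbit_window_eq_if_walls)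
      (use Rset_walls_enclose_center[OF that] in auto)
  then show ?thesis
    unfolding Rset_eq_UN image_UN by blast
qed

lemma ult_periodic_orbit_window_Rset:
  assumes "ult_periodic v" "x \<in> Rset X B k m"
  shows "ult_periodic (orbit_window F x k)"
proof -
  obtain t1 t2 where t: "t1 \<in> {- int m - int k..- int k - int (length B) + 1}"
    "t2 \<in> {int k..int m + int k - int (length B) + 1}" and x: "x \<in> cyl X B t1" "x \<in> cyl X B t2"
    using assms(2) unfolding Rset_eq_UN by blast
  show ?thesis
    by (rule ult_periodic_orbit_window_if_walls[OF assms(1) x Rset_walls_enclose_center[OF t]])
qed

lemma ult_periodic_v_if_invariant_measure:
  assumes "prob_space \<mu>" "sets \<mu> = sets (borel_conf X)"
    and invariant: "\<forall>E\<in>sets \<mu>. measure \<mu> {x\<in>X. shift x \<in> E} = measure \<mu> E"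
    and "0 < measure \<mu> (cyl X B 0)"
  shows "ult_periodic v"
proof -
  interpret prob_space \<mu> by fact
  have events: "cyl X B t \<in> events" for t
    using assms(2) cyl_in_borel_conf by simp
  have same_measure: "measure \<mu> (cyl X B (int n)) = measure \<mu> (cyl X B 0)" for n
  proof (induction n)
    case (Suc n)
    have "prob (cyl X B (int (Suc n))) = prob {x \<in> X. shift x \<in> cyl X B (int n)}"
      using shift_preimage_cyl[of X B "int n"] shift_image by (simp add: add.commute)
    also have "\<dots> = prob (cyl X B (int n))"
      using invariant events by blast
    finally show ?case using Suc by simp
  qed simp
  have "\<exists>x j1 j2 j3. j1 < j2 \<and> j2 < j3 \<and> x \<in> cyl X B (int (j1 * (r + 1))) \<and>
      x \<in> cyl X B (int (j2 * (r + 1))) \<and> x \<in> cyl X B (int (j3 * (r + 1)))"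
    by (rule three_events_intersect[where \<beta>="measure \<mu> (cyl X B 0)"])
      (rule events, rule same_measure, rule assms(4))
  then obtain x j1 j2 j3 where "j1 < j2" "j2 < j3" and walls: "x \<in> cyl X B (int (j1 * (r + 1)))"
    "x \<in> cyl X B (int (j2 * (r + 1)))" "x \<in> cyl X B (int (j3 * (r + 1)))"
    by blast
  have spaced: "int (a * (r + 1)) + int r \<le> int (b * (r + 1))" if "a < b" for a b
  proof -
    have "a * (r + 1) + r \<le> b * (r + 1)"
      using mult_le_mono1[of "Suc a" b "r + 1"] that by simp
    then show ?thesis by (metis of_nat_add of_nat_le_iff)
  qed
  show ?thesis
    by (rule ult_periodic_v_if_three_walls[OF walls spaced[OF \<open>j1 < j2\<close>] spaced[OF \<open>j2 < j3\<close>]])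
qed

text \<open>On R(k, m) every column has period dividing p(k, m) and preperiod at most p'(k, m), so the
  average in W_m computes pointwise the frequency of u in the periodic part of the column. This
  needs the set of columns to be finite: Lcm and Sup of an infinite set of naturals are 0.\<close>

lemma Wm_has_integral:
  assumes "borel_prob_on X \<mu>" "ult_periodic v" "length u = 2 * k + 1"
  shows "has_bochner_integral \<mu> (\<lambda>x. indicator (Rset X B k m) x * orbit_freq F k u x)
    (Wm X F \<mu> B k u m)"
proof -
  interpret prob_space \<mu> using assms(1) by (simp add: borel_prob_on_def)
  have sets: "sets \<mu> = sets (borel_conf X)" and space: "space \<mu> = X"
    using assms(1) by (auto simp: borel_prob_on_def)
  define R P P' where "R = Rset X B k m" and "P = pkm X F B k m" and "P' = ppkm X F B k m"
  define E where "E n = {x \<in> X. (F ^^ n) x \<in> cyl X u (- int k)}" for n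
  define col where "col x = orbit_window F x k" for x
  have fin: "finite (col ` R)"
    using finite_orbit_windows_Rset by (simp add: R_def col_def)
  have per: "ult_periodic (col x)" if "x \<in> R" for x
    using ult_periodic_orbit_window_Rset[OF assms(2)] that by (simp add: R_def col_def)
  have P_eq: "P = Lcm (ult_period ` col ` R)"
    by (simp add: P_def pkm_def R_def col_def image_image)
  have P'_eq: "P' = Sup (ult_preperiod ` col ` R)"
    by (simp add: P'_def ppkm_def R_def col_def image_image)
  have "0 < P"
    unfolding P_eq using fin per by (auto intro: Lcm_ult_period_pos)
  have freq: "1 / real P * (\<Sum>i<P. indicator (R \<inter> E (i + P')) x) =
      indicator R x * orbit_freq F k u x" if "x \<in> space \<mu>" for x
  proof (cases "x \<in> R")
    case True
    have ind: "indicator (R \<inter> E n) x = of_bool (col x n = u)" for n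
      using True that space iterate_in_cyl_iff[OF _ assms(3)]
      by (simp add: E_def col_def indicator_def)
    have "1 / real P * (\<Sum>i<P. indicator (R \<inter> E (i + P')) x) =
        1 / real P * (\<Sum>i<P. of_bool (col x (i + P') = u))"
      unfolding ind ..
    also have "\<dots> = 1 / real (ult_period (col x)) *
        (\<Sum>i<ult_period (col x). of_bool (col x (i + ult_preperiod (col x)) = u))"
    proof (rule average_over_multiple_of_period[where g="\<lambda>w. of_bool (w = u)" and s="col x"])
      show "0 < ult_period (col x)" by (rule ult_period_pos[OF per[OF True]])
      show "\<forall>n\<ge>ult_preperiod (col x). col x (n + ult_period (col x)) = col x n"
        using ult_periodic_from_preperiod[OF per[OF True]] by blast
      show "ult_period (col x) dvd P"
        unfolding P_eq using True by (intro dvd_Lcm imageI)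
      show "ult_preperiod (col x) \<le> P'"
        unfolding P'_eq using True fin by (intro le_cSup_finite) auto
    qed fact
    also have "\<dots> = indicator R x * orbit_freq F k u x"
      using True by (simp add: orbit_freq_def col_def Let_def)
    finally show ?thesis .
  next
    case False
    then show ?thesis by simp
  qed
  have "R \<inter> E n \<in> sets \<mu>" for n
    unfolding sets R_def E_def
    by (intro sets.Int Rset_in_borel_conf iterate_preimage_cyl_in_borel_conf)
  then have "has_bochner_integral \<mu> (\<lambda>x. 1 / real P * (\<Sum>i<P. indicator (R \<inter> E (i + P')) x))
      (1 / real P * (\<Sum>i<P. measure \<mu> (R \<inter> E (i + P'))))"
    by (intro has_bochner_integral_mult_right has_bochner_integral_sum
        has_bochner_integral_real_indicator) (auto simp: less_top[symmetric])
  moreover have "has_bochner_integral \<mu> (\<lambda>x. 1 / real P * (\<Sum>i<P. indicator (R \<inter> E (i + P')) x))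
      (1 / real P * (\<Sum>i<P. measure \<mu> (R \<inter> E (i + P')))) \<longleftrightarrow>
    has_bochner_integral \<mu> (\<lambda>x. indicator R x * orbit_freq F k u x) (Wm X F \<mu> B k u m)"
    by (rule has_bochner_integral_cong[OF refl freq])
      (simp_all add: Wm_def R_def P_def P'_def E_def)
  ultimately show ?thesis
    by (simp only: R_def)
qed

end

theorem mainTheorem6:
  fixes X :: "('a::finite) config set"
    and F :: "'a config \<Rightarrow> 'a config"
    and r :: nat and f :: "'a list \<Rightarrow> 'a"
    and \<mu> :: "'a config measure"
    and B u :: "'a list" and k :: nat
  assumes "subshift X"
    and "is_CA X F r f"
    and "borel_prob_on X \<mu>"
    and "shift_ergodic X \<mu>"
    and "equicont_measure X F \<mu>"
    and "blocking_word X F r B"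
    and "measure \<mu> (cyl X B 0) > 0"
    and "length u = 2 * k + 1"
  shows "mono (\<lambda>m. Wm X F \<mu> B k u m)"
proof -
  obtain k0 i v where "length B = 2 * k0 + 1" "r \<le> 2 * i + 1"
    and "\<forall>x\<in>X. window x (- int k0) (int k0) = B \<longrightarrow>
      (\<forall>n\<ge>1. window ((F ^^ n) x) (- int i) (int i) = v n)"
    using assms(6) unfolding blocking_word_def by blast
  then interpret blocking_ca X F r f B k0 i v
    using assms(1,2) by unfold_locales (auto simp: subshift_def)
  have "ult_periodic v"
    using assms(3,4,7) by (intro ult_periodic_v_if_invariant_measure)
      (auto simp: borel_prob_on_def shift_ergodic_def)
  have integral: "has_bochner_integral \<mu> (\<lambda>x. indicator (Rset X B k m) x * orbit_freq F k u x)
      (Wm X F \<mu> B k u m)" for m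
    using assms(3) \<open>ult_periodic v\<close> assms(8) by (rule Wm_has_integral)
  show ?thesis
  proof (rule monoI)
    fix m m' :: nat assume "m \<le> m'"
    then have pointwise: "indicator (Rset X B k m) x * orbit_freq F k u x
        \<le> indicator (Rset X B k m') x * orbit_freq F k u x" for x
      using Rset_mono[of m m'] orbit_freq_nonneg by (auto simp: indicator_def)
    have "(\<integral>x. indicator (Rset X B k m) x * orbit_freq F k u x \<partial>\<mu>)
        \<le> (\<integral>x. indicator (Rset X B k m') x * orbit_freq F k u x \<partial>\<mu>)"
      by (rule integral_mono[OF integrable.intros[OF integral]
            integrable.intros[OF integral] pointwise])
    then show "Wm X F \<mu> B k u m \<le> Wm X F \<mu> B k u m'"
      by (simp only: has_bochner_integral_integral_eq[OF integral])
  qed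
qed

end
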